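(* Let $p$ be a prime, $m\ge1$, $s\ge0$ integers, $R^4=\mathbb{F}_{p^m}[u]/\langle u^4\rangle$, $f(x)\in\mathbb{F}_{p^m}[x]$ irreducible, $\omega(x)=f(x)^{p^s}$, $R^{4,\omega}=R^4[x]/\langle\omega(x)\rangle$, $R^{1,\omega}=\mathbb{F}_{p^m}[x]/\langle\omega(x)\rangle$. Let $a,t_1,t_2$ be integers with $0\le t_2<t_1<a\le p^s-1$ and let $h_1(x),h_2(x)\in R^{1,\omega}$ each be either $0$ or a unit of $R^{1,\omega}$. Let $L$ be the smallest non-negative integer such that $u^3f(x)^L\in\langle uf(x)^a+u^2f(x)^{t_1}h_1(x)+u^3f(x)^{t_2}h_2(x)\rangle$ (ideal of $R^{4,\omega}$). Then $$L=\begin{cases} a, & h_1=h_2=0,\\ \min\{a,\ p^s-a+t_2\}, & h_1=0,\ h_2\ne0,\\ \min\{a,\ p^s-2(a-t_1)\}, & h_1\ne0,\ h_2=0,\ a\le p^s-a+t_1,\\ t_1, & h_1\ne0,\ h_2=0,\ a\ge p^s-a+t_1,\\ \min\{a,\ p^s-a+t_1,\ \beta_1\}, & h_1\ne0,\ h_2\ne0,\ a\le p^s-a+t_1,\\ \min\{a,\ p^s+t_2-t_1,\ \beta_2\}, & h_1\ne0,\ h_2\ne0,\ a\ge p^s-a+t_1, \end{cases}$$ where $\beta_1=\max\{k: f(x)^k \text{ divides } f(x)^{p^s-a+t_2}h_2(x)-f(x)^{p^s-2a+2t_1}h_1(x)^2\}$ and $\beta_2=\max\{k: f(x)^k \text{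 divides } f(x)^{t_1}h_1(x)-f(x)^{a+t_2-t_1}h_2(x)h_1(x)^{-1}\}$, divisibility being taken in $R^{1,\omega}$.
   Context: $R^{1,\omega}$ is identified with the subring of $R^{4,\omega}$ consisting of classes of polynomials over $\mathbb{F}_{p^m}$ (no $u$). *)

theory Defs
  imports "HOL-Computational_Algebra.Computational_Algebra" "HOL-Library.Extended_Nat"
begin

text \<open>Model of R^{4,omega} = F[u]/(u^4) [x]/(omega(x)) = (F[x]/(omega))[u]/(u^4):
  an element is represented by its four u-coefficients (indices 0..3), each a polynomial
  over F taken modulo omega; entries at indices >= 4 are ignored.\<close>

definition r4w_mult :: "'a::field poly \<Rightarrow> (nat \<Rightarrow> 'a poly) \<Rightarrow> (nat \<Rightarrow> 'a poly) \<Rightarrow> (nat \<Rightarrow> 'a poly)" where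
  "r4w_mult \<omega> A B = (\<lambda>k. if k < 4 then (\<Sum>i\<le>k. A i * B (k - i)) mod \<omega> else 0)"

definition r4w_eq :: "'a::field poly \<Rightarrow> (nat \<Rightarrow> 'a poly) \<Rightarrow> (nat \<Rightarrow> 'a poly) \<Rightarrow> bool" where
  "r4w_eq \<omega> A B = (\<forall>k<4. A k mod \<omega> = B k mod \<omega>)"

definition r4w_in_ideal :: "'a::field poly \<Rightarrow> (nat \<Rightarrow> 'a poly) \<Rightarrow> (nat \<Rightarrow> 'a poly) \<Rightarrow> bool" where
  "r4w_in_ideal \<omega> g y = (\<exists>r. r4w_eq \<omega> (r4w_mult \<omega> r g) y)"

definition r4w_elem :: "'a::field poly \<Rightarrow> 'a poly \<Rightarrow> 'a poly \<Rightarrow> 'a poly \<Rightarrow> (nat \<Rightarrow> 'a poly)" where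
  "r4w_elem c0 c1 c2 c3 = (\<lambda>k. if k = 0 then c0 else if k = 1 then c1 else if k = 2 then c2
                               else if k = 3 then c3 else 0)"

definition r1w_unit :: "'a::field poly \<Rightarrow> 'a poly \<Rightarrow> bool" where
  "r1w_unit \<omega> h = (\<exists>v. (h * v) mod \<omega> = 1 mod \<omega>)"

definition r1w_inv :: "'a::field poly \<Rightarrow> 'a poly \<Rightarrow> 'a poly" where
  "r1w_inv \<omega> h = (SOME v. (h * v) mod \<omega> = 1 mod \<omega>)"

definition r1w_dvd :: "'a::field poly \<Rightarrow> 'a poly \<Rightarrow> 'a poly \<Rightarrow> bool" where
  "r1w_dvd \<omega> d y = (\<exists>q. (d * q) mod \<omega> = y mod \<omega>)"

text \<open>max{k. f^k divides y in R^{1,omega}}, taken in enat (infinity if y = 0 in R^{1,omega}).\<close>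
definition r1w_fval :: "'a::field poly \<Rightarrow> 'a poly \<Rightarrow> 'a poly \<Rightarrow> enat" where
  "r1w_fval \<omega> f y = Sup {enat k | k. r1w_dvd \<omega> (f ^ k) y}"

end

theory Submission
  imports Defs
begin

text \<open>
  Multiplying \<open>g = u f\<^sup>a + u\<^sup>2 f\<^bsup>t1\<^esup> h1 + u\<^sup>3 f\<^bsup>t2\<^esup> h2\<close> by
  \<open>r0 + r1 u + r2 u\<^sup>2\<close> and asking the coefficients of \<open>u\<close> and \<open>u\<^sup>2\<close> to vanish
  modulo \<open>f\<^bsup>N\<^esup>\<close>, \<open>N = p\<^sup>s\<close>, forces \<open>r0\<close> to be a multiple of \<open>f\<^bsup>N-a\<^esup>\<close>,
  and also of \<open>f\<^bsup>a-t1\<^esup>\<close> when \<open>h1\<close> is a unit, and then determines \<open>r1\<close> up to a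
  multiple of \<open>f\<^bsup>N-a\<^esup>\<close>. Hence the attainable \<open>u\<^sup>3\<close>-coefficients form the ideal of
  \<open>F[x]/(f\<^bsup>N\<^esup>)\<close> generated by \<open>f\<^sup>a\<close> and at most two further explicit elements.
  In this chain ring \<open>f\<^sup>j\<close> lies in an ideal with finitely many generators exactly when
  some generator has \<open>f\<close>-adic valuation at most \<open>j\<close>, so \<open>L\<close> is the least valuation of
  the generators, which is evaluated case by case.
\<close>

section \<open>Powers of a prime element\<close>

lemma power_dvd_power_mult_iff:
  fixes f :: "'a::idom"
  assumes "f \<noteq> 0" "a \<le> N"
  shows "f ^ N dvd f ^ a * r \<longleftrightarrow> f ^ (N - a) dvd r"
proof -
  have "f ^ N = f ^ a * f ^ (N - a)" using assms(2) by (simp add: power_add[symmetric])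
  then show ?thesis using assms(1) by simp
qed

lemma prime_elem_power_dvd_power_iff:
  fixes f :: "'a::algebraic_semidom"
  assumes "prime_elem f"
  shows "f ^ m dvd f ^ n \<longleftrightarrow> m \<le> n"
  using assms by (simp add: dvd_power_iff prime_elem_not_unit prime_elem_not_zeroI)

lemma prime_elem_power_dvd_mult_iff:
  fixes f :: "'a::idom"
  assumes f: "prime_elem f" and u: "\<not> f dvd u"
  shows "f ^ k dvd u * x \<longleftrightarrow> f ^ k dvd x"
proof
  show "f ^ k dvd u * x \<Longrightarrow> f ^ k dvd x"
  proof (induction k)
    case (Suc k)
    then have "f ^ k dvd x" by (metis dvd_mult_left power_Suc2)
    then obtain y where y: "x = f ^ k * y" ..
    with Suc.prems have "f ^ k * f dvd f ^ k * (u * y)" by (simp add: power_Suc2 ac_simps)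
    then have "f dvd u * y" using f by (simp add: prime_elem_not_zeroI)
    then have "f dvd y" using f u prime_elem_dvd_mult_iff by blast
    then show ?case using y by (simp add: power_Suc2)
  qed simp
qed simp

lemma prime_elem_power_dvd_power_mult_iff:
  fixes f :: "'a::{idom, algebraic_semidom}"
  assumes f: "prime_elem f" and u: "\<not> f dvd u"
  shows "f ^ m dvd f ^ k * u \<longleftrightarrow> m \<le> k"
  using prime_elem_power_dvd_mult_iff[OF f u, of m "f ^ k"] prime_elem_power_dvd_power_iff[OF f]
  by (simp add: mult.commute)

lemma euclidean_ring_bezout:
  fixes a b :: "'a::euclidean_ring"
  assumes "a \<noteq> 0"
  obtains x y d where "x * a + y * b = d" "d dvd a" "d dvd b"
proof -
  define S where "S = {x * a + y * b | x y. x * a + y * b \<noteq> 0}"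
  have "a \<in> S" unfolding S_def
    by (rule CollectI, rule exI[of _ 1], rule exI[of _ 0]) (simp add: assms)
  then obtain d where "d \<in> S" and d_min: "\<And>e. e \<in> S \<Longrightarrow> euclidean_size d \<le> euclidean_size e"
    using ex_has_least_nat[of "\<lambda>e. e \<in> S" a euclidean_size] by blast
  then obtain x y where xy: "x * a + y * b = d" and "d \<noteq> 0" unfolding S_def by blast
  have dvd_comb: "d dvd x' * a + y' * b" for x' y'
  proof (rule ccontr)
    define z where "z = x' * a + y' * b"
    assume "\<not> d dvd x' * a + y' * b"
    then have "z mod d \<noteq> 0" by (simp add: z_def mod_eq_0_iff_dvd)
    moreover have "z mod d = (x' - z div d * x) * a + (y' - z div d * y) * b"
      unfolding minus_div_mult_eq_mod[symmetric] unfolding z_def xy[symmetric] by (simp add: algebra_simps)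
    ultimately have "z mod d \<in> S" unfolding S_def
      by (intro CollectI exI[of _ "x' - z div d * x"] exI[of _ "y' - z div d * y"]) simp
    with d_min have "euclidean_size d \<le> euclidean_size (z mod d)" by blast
    with mod_size_less[OF \<open>d \<noteq> 0\<close>, of z] show False by simp
  qed
  show ?thesis
    using that[OF xy] dvd_comb[of 1 0] dvd_comb[of 0 1] by simp
qed

lemma inverse_mod_prime_power:
  fixes f w :: "'a::euclidean_ring"
  assumes f: "prime_elem f" and w: "\<not> f dvd w"
  obtains v where "f ^ N dvd w * v - 1"
proof -
  have f0: "f ^ N \<noteq> 0" using f by (simp add: prime_elem_not_zeroI)
  obtain x y d where xy: "x * f ^ N + y * w = d" and "d dvd f ^ N" "d dvd w"
    using euclidean_ring_bezout[OF f0] .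
  then obtain e where e: "f ^ N = d * e" by blast
  have "\<not> f dvd d" using \<open>d dvd w\<close> w dvd_trans by blast
  then have "f ^ N dvd e" using prime_elem_power_dvd_mult_iff[OF f] e by (metis dvd_refl)
  then obtain c where "e = f ^ N * c" ..
  with e f0 have dc: "d * c = 1" by (metis mult.assoc mult.commute mult_cancel_left1)
  have "w * (y * c) - 1 = f ^ N * (- x * c)"
    using xy dc by (auto simp: algebra_simps)
  then show ?thesis using that by (metis dvd_triv_left)
qed

lemma prime_power_factorization_below:
  fixes f X :: "'a::idom"
  assumes "prime_elem f" and "\<not> f ^ Suc j dvd X"
  shows "\<exists>k w. k \<le> j \<and> X = f ^ k * w \<and> \<not> f dvd w"
  using assms(2)
proof (induction j arbitrary: X)
  case 0
  then show ?case by auto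
next
  case (Suc j)
  show ?case
  proof (cases "f dvd X")
    case True
    then obtain X' where X': "X = f * X'" ..
    with Suc.prems have "\<not> f ^ Suc j dvd X'" by (auto simp: mult_dvd_mono)
    with Suc.IH obtain k w where "k \<le> j" "X' = f ^ k * w" "\<not> f dvd w" by blast
    with X' show ?thesis by (intro exI[of _ "Suc k"] exI[of _ w]) auto
  qed (auto intro: exI[of _ 0])
qed

lemma exists_mult_congruent_power:
  fixes f X :: "'a::euclidean_ring"
  assumes f: "prime_elem f" and X: "\<not> f ^ Suc j dvd X"
  obtains c where "f ^ N dvd c * X - f ^ j"
proof -
  obtain k w where "k \<le> j" "X = f ^ k * w" "\<not> f dvd w"
    using prime_power_factorization_below[OF f X] by blast
  moreover obtain v where "f ^ N dvd w * v - 1"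
    using inverse_mod_prime_power[OF f \<open>\<not> f dvd w\<close>] .
  ultimately have "f ^ N dvd f ^ j * (w * v - 1)" by simp
  also have "f ^ j * (w * v - 1) = f ^ (j - k) * v * X - f ^ j"
    using \<open>k \<le> j\<close> \<open>X = f ^ k * w\<close> by (simp add: algebra_simps power_add[symmetric])
  finally show ?thesis using that by blast
qed

section \<open>Ideals modulo a prime power\<close>

definition in_ideal_mod :: "'a::comm_ring_1 \<Rightarrow> 'a set \<Rightarrow> 'a \<Rightarrow> bool" where
  "in_ideal_mod \<omega> E c \<longleftrightarrow> (\<exists>q. \<omega> dvd (\<Sum>e\<in>E. q e * e) - c)"

lemma in_ideal_mod_generator:
  assumes "finite E" "e \<in> E"
  shows "in_ideal_mod \<omega> E (k * e)"
proof -
  have "(\<Sum>x\<in>E. (if x = e then k else 0) * x) = (\<Sum>x\<in>E. if x = e then k * e else 0)"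
    by (rule sum.cong) auto
  also have "\<dots> = k * e" using assms by simp
  finally show ?thesis unfolding in_ideal_mod_def by (metis dvd_0_right diff_self)
qed

lemma in_ideal_mod_add:
  assumes "in_ideal_mod \<omega> E c" "in_ideal_mod \<omega> E d"
  shows "in_ideal_mod \<omega> E (c + d)"
proof -
  obtain q r where "\<omega> dvd (\<Sum>e\<in>E. q e * e) - c" "\<omega> dvd (\<Sum>e\<in>E. r e * e) - d"
    using assms unfolding in_ideal_mod_def by blast
  then have "\<omega> dvd (\<Sum>e\<in>E. (q e + r e) * e) - (c + d)"
    using dvd_add by (fastforce simp: sum.distrib algebra_simps)
  then show ?thesis unfolding in_ideal_mod_def by (intro exI[of _ "\<lambda>e. q e + r e"])
qed

lemma in_ideal_mod_cong:
  assumes "\<omega> dvd c - d" "in_ideal_mod \<omega> E c"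
  shows "in_ideal_mod \<omega> E d"
proof -
  obtain q where "\<omega> dvd (\<Sum>e\<in>E. q e * e) - c" using assms(2) unfolding in_ideal_mod_def by blast
  with assms(1) have "\<omega> dvd ((\<Sum>e\<in>E. q e * e) - c) + (c - d)" by (rule dvd_add[rotated])
  then show ?thesis unfolding in_ideal_mod_def by auto
qed

lemma power_in_ideal_mod_iff:
  fixes f :: "'a::euclidean_ring"
  assumes f: "prime_elem f" and E: "finite E" and "j < N"
  shows "in_ideal_mod (f ^ N) E (f ^ j) \<longleftrightarrow> (\<exists>e\<in>E. \<not> f ^ Suc j dvd e)"
proof
  assume "in_ideal_mod (f ^ N) E (f ^ j)"
  then obtain q where q: "f ^ N dvd (\<Sum>e\<in>E. q e * e) - f ^ j" unfolding in_ideal_mod_def ..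
  show "\<exists>e\<in>E. \<not> f ^ Suc j dvd e"
  proof (rule ccontr)
    assume "\<not> (\<exists>e\<in>E. \<not> f ^ Suc j dvd e)"
    then have "f ^ Suc j dvd (\<Sum>e\<in>E. q e * e)" by (auto intro: dvd_sum)
    moreover have "f ^ Suc j dvd f ^ N" using \<open>j < N\<close> by (intro le_imp_power_dvd) simp
    ultimately have "f ^ Suc j dvd f ^ j" using q by (metis dvd_diff_right_iff dvd_trans)
    then show False by (metis prime_elem_power_dvd_power_iff[OF f] Suc_n_not_le_n)
  qed
next
  assume "\<exists>e\<in>E. \<not> f ^ Suc j dvd e"
  then obtain e c where "e \<in> E" "f ^ N dvd c * e - f ^ j"
    using exists_mult_congruent_power[OF f] by metis
  then show "in_ideal_mod (f ^ N) E (f ^ j)"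
    using in_ideal_mod_cong in_ideal_mod_generator[OF E] by blast
qed

section \<open>The \<open>u\<^sup>3\<close>-part of a principal ideal of \<open>R\<^bsup>4,\<omega>\<^esup>\<close>\<close>

text \<open>\<open>u3_in_ideal \<omega> g1 g2 g3 c\<close> says that \<open>u\<^sup>3 c\<close> lies in the ideal of \<open>R\<^bsup>4,\<omega>\<^esup>\<close>
  generated by \<open>u g1 + u\<^sup>2 g2 + u\<^sup>3 g3\<close>: \<open>r0 + r1 u + r2 u\<^sup>2\<close> is the multiplier, whose
  \<open>u\<^sup>3\<close>-coefficient is irrelevant.\<close>
definition u3_in_ideal :: "'a::comm_ring_1 \<Rightarrow> 'a \<Rightarrow> 'a \<Rightarrow> 'a \<Rightarrow> 'a \<Rightarrow> bool" where
  "u3_in_ideal \<omega> g1 g2 g3 c \<longleftrightarrow> (\<exists>r0 r1 r2. \<omega> dvd r0 * g1 \<and> \<omega> dvd r0 * g2 + r1 * g1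
     \<and> \<omega> dvd r0 * g3 + r1 * g2 + r2 * g1 - c)"

lemma r4w_in_ideal_iff_u3_in_ideal:
  fixes \<omega> g1 g2 g3 c :: "'a::field poly"
  shows "r4w_in_ideal \<omega> (r4w_elem 0 g1 g2 g3) (r4w_elem 0 0 0 c) \<longleftrightarrow> u3_in_ideal \<omega> g1 g2 g3 c"
proof -
  have "r4w_in_ideal \<omega> (r4w_elem 0 g1 g2 g3) (r4w_elem 0 0 0 c) \<longleftrightarrow>
      (\<exists>r :: nat \<Rightarrow> 'a poly. \<omega> dvd r 0 * g1 \<and> \<omega> dvd r 0 * g2 + r 1 * g1
        \<and> \<omega> dvd r 0 * g3 + r 1 * g2 + r 2 * g1 - c)"
    (is "_ \<longleftrightarrow> ?multiplier_exists")
    by (simp add: r4w_in_ideal_def r4w_eq_def r4w_mult_def r4w_elem_def mod_eq_dvd_iff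
        numeral_eq_Suc All_less_Suc atMost_Suc ac_simps)
  also have "\<dots> \<longleftrightarrow> u3_in_ideal \<omega> g1 g2 g3 c"
  proof
    assume "u3_in_ideal \<omega> g1 g2 g3 c"
    then obtain r0 r1 r2 where "\<omega> dvd r0 * g1" "\<omega> dvd r0 * g2 + r1 * g1"
        "\<omega> dvd r0 * g3 + r1 * g2 + r2 * g1 - c"
      unfolding u3_in_ideal_def by blast
    then show ?multiplier_exists
      by (intro exI[of _ "\<lambda>i. if i = 0 then r0 else if i = 1 then r1 else r2"]) simp
  qed (auto simp: u3_in_ideal_def)
  finally show ?thesis .
qed

lemma u3_in_idealI:
  assumes "\<omega> dvd x * g1" "\<omega> dvd x * g2 + y * g1" "\<omega> dvd x * g3 + y * g2 + z * g1 - c"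
  shows "u3_in_ideal \<omega> g1 g2 g3 c"
  using assms unfolding u3_in_ideal_def by blast

lemma u3_in_ideal_add:
  assumes "u3_in_ideal \<omega> g1 g2 g3 c" "u3_in_ideal \<omega> g1 g2 g3 d"
  shows "u3_in_ideal \<omega> g1 g2 g3 (c + d)"
proof -
  obtain r0 r1 r2 where r: "\<omega> dvd r0 * g1" "\<omega> dvd r0 * g2 + r1 * g1"
      "\<omega> dvd r0 * g3 + r1 * g2 + r2 * g1 - c"
    using assms(1) unfolding u3_in_ideal_def by blast
  obtain s0 s1 s2 where s: "\<omega> dvd s0 * g1" "\<omega> dvd s0 * g2 + s1 * g1"
      "\<omega> dvd s0 * g3 + s1 * g2 + s2 * g1 - d"
    using assms(2) unfolding u3_in_ideal_def by blast
  have "\<omega> dvd (r0 + s0) * g1" "\<omega> dvd (r0 + s0) * g2 + (r1 + s1) * g1"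
      "\<omega> dvd (r0 + s0) * g3 + (r1 + s1) * g2 + (r2 + s2) * g1 - (c + d)"
    using dvd_add[OF r(1) s(1)] dvd_add[OF r(2) s(2)] dvd_add[OF r(3) s(3)]
    by (simp_all add: algebra_simps)
  then show ?thesis unfolding u3_in_ideal_def by blast
qed

lemma u3_in_ideal_mult:
  assumes "u3_in_ideal \<omega> g1 g2 g3 c"
  shows "u3_in_ideal \<omega> g1 g2 g3 (k * c)"
proof -
  obtain r0 r1 r2 where r: "\<omega> dvd r0 * g1" "\<omega> dvd r0 * g2 + r1 * g1"
      "\<omega> dvd r0 * g3 + r1 * g2 + r2 * g1 - c"
    using assms unfolding u3_in_ideal_def by blast
  have "\<omega> dvd (k * r0) * g1" "\<omega> dvd (k * r0) * g2 + (k * r1) * g1"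
      "\<omega> dvd (k * r0) * g3 + (k * r1) * g2 + (k * r2) * g1 - k * c"
    using dvd_mult[OF r(1), of k] dvd_mult[OF r(2), of k] dvd_mult[OF r(3), of k]
    by (simp_all add: algebra_simps)
  then show ?thesis unfolding u3_in_ideal_def by blast
qed

lemma u3_in_ideal_cong:
  assumes "\<omega> dvd c - d" "u3_in_ideal \<omega> g1 g2 g3 c"
  shows "u3_in_ideal \<omega> g1 g2 g3 d"
proof -
  obtain r0 r1 r2 where r: "\<omega> dvd r0 * g1" "\<omega> dvd r0 * g2 + r1 * g1"
      "\<omega> dvd r0 * g3 + r1 * g2 + r2 * g1 - c"
    using assms(2) unfolding u3_in_ideal_def by blast
  have "\<omega> dvd (r0 * g3 + r1 * g2 + r2 * g1 - c) + (c - d)" using r(3) assms(1) by (rule dvd_add)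
  then have "\<omega> dvd r0 * g3 + r1 * g2 + r2 * g1 - d" by (simp add: algebra_simps)
  with r(1,2) show ?thesis unfolding u3_in_ideal_def by blast
qed

lemma u3_in_ideal_g1: "u3_in_ideal \<omega> g1 g2 g3 g1"
  by (rule u3_in_idealI[where x = 0 and y = 0 and z = 1]) simp_all

lemma u3_in_ideal_mult_g2:
  assumes "\<omega> dvd r * g1"
  shows "u3_in_ideal \<omega> g1 g2 g3 (r * g2)"
  using assms by (intro u3_in_idealI[where x = 0 and y = r and z = 0]) simp_all

lemma u3_in_ideal_shifted_h1:
  fixes f h1 g :: "'a::comm_ring_1"
  assumes "a \<le> N"
  shows "u3_in_ideal (f ^ N) (f ^ a) (f ^ t1 * h1) g (f ^ (N - a + t1) * h1)"
proof -
  have "u3_in_ideal (f ^ N) (f ^ a) (f ^ t1 * h1) g (f ^ (N - a) * (f ^ t1 * h1))"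
    by (rule u3_in_ideal_mult_g2) (simp add: assms power_add[symmetric])
  then show ?thesis by (simp add: power_add ac_simps)
qed

lemma u3_in_ideal_if_in_ideal_mod:
  assumes E: "finite E" and gens: "\<And>e. e \<in> E \<Longrightarrow> u3_in_ideal \<omega> g1 g2 g3 e"
    and c: "in_ideal_mod \<omega> E c"
  shows "u3_in_ideal \<omega> g1 g2 g3 c"
proof -
  obtain q where q: "\<omega> dvd (\<Sum>e\<in>E. q e * e) - c" using c unfolding in_ideal_mod_def ..
  have "u3_in_ideal \<omega> g1 g2 g3 (\<Sum>e\<in>E'. q e * e)" if "E' \<subseteq> E" for E'
    using finite_subset[OF that E] that
  proof (induction E' rule: finite_induct)
    case empty
    show ?case using u3_in_ideal_mult[OF u3_in_ideal_g1[of \<omega> g1 g2 g3], of 0] by simp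
  next
    case (insert e E')
    then show ?case by (simp add: u3_in_ideal_add u3_in_ideal_mult gens)
  qed
  from this[OF order_refl] show ?thesis by (rule u3_in_ideal_cong[OF q])
qed

lemma u3_in_ideal_iff_h1_zero:
  fixes f h1 h2 c :: "'a::idom"
  assumes f: "f \<noteq> 0" and "a \<le> N" and h1: "f ^ N dvd h1"
  shows "u3_in_ideal (f ^ N) (f ^ a) (f ^ t1 * h1) (f ^ t2 * h2) c \<longleftrightarrow>
    in_ideal_mod (f ^ N) {f ^ a, f ^ (N - a + t2) * h2} c"
proof -
  define G where "G = f ^ (N - a + t2) * h2"
  show ?thesis unfolding G_def[symmetric]
  proof
    assume "u3_in_ideal (f ^ N) (f ^ a) (f ^ t1 * h1) (f ^ t2 * h2) c"
    then obtain r0 r1 r2 where r: "f ^ N dvd r0 * f ^ a"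
        "f ^ N dvd r0 * (f ^ t2 * h2) + r1 * (f ^ t1 * h1) + r2 * f ^ a - c"
      unfolding u3_in_ideal_def by blast
    obtain k0 where k0: "r0 = f ^ (N - a) * k0"
      using r(1) power_dvd_power_mult_iff[OF f \<open>a \<le> N\<close>] by (metis dvdE mult.commute)
    have "f ^ N dvd (r0 * (f ^ t2 * h2) + r1 * (f ^ t1 * h1) + r2 * f ^ a - c) - r1 * (f ^ t1 * h1)"
      using h1 by (intro dvd_diff[OF r(2)]) simp
    also have "\<dots> = k0 * G + r2 * f ^ a - c"
      unfolding k0 G_def by (simp add: power_add algebra_simps)
    finally have "f ^ N dvd k0 * G + r2 * f ^ a - c" .
    moreover have "in_ideal_mod (f ^ N) {f ^ a, G} (k0 * G + r2 * f ^ a)"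
      by (intro in_ideal_mod_add in_ideal_mod_generator) auto
    ultimately show "in_ideal_mod (f ^ N) {f ^ a, G} c"
      by (rule in_ideal_mod_cong)
  next
    assume c: "in_ideal_mod (f ^ N) {f ^ a, G} c"
    have "u3_in_ideal (f ^ N) (f ^ a) (f ^ t1 * h1) (f ^ t2 * h2) (f ^ (N - a) * (f ^ t2 * h2))"
      using \<open>a \<le> N\<close> h1
      by (intro u3_in_idealI[where x = "f ^ (N - a)" and y = 0 and z = 0])
        (simp_all add: power_add[symmetric])
    then have "u3_in_ideal (f ^ N) (f ^ a) (f ^ t1 * h1) (f ^ t2 * h2) G"
      by (simp add: G_def power_add ac_simps)
    with u3_in_ideal_g1 show "u3_in_ideal (f ^ N) (f ^ a) (f ^ t1 * h1) (f ^ t2 * h2) c"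
      by (intro u3_in_ideal_if_in_ideal_mod[OF _ _ c]) auto
  qed
qed

lemma u3_in_ideal_iff_double_a_le:
  fixes f h1 h2 c :: "'a::idom"
  assumes f: "f \<noteq> 0" and "t1 < a" and "2 * a \<le> N + t1"
  shows "u3_in_ideal (f ^ N) (f ^ a) (f ^ t1 * h1) (f ^ t2 * h2) c \<longleftrightarrow>
    in_ideal_mod (f ^ N)
      {f ^ a, f ^ (N - a + t1) * h1, f ^ (N - a + t2) * h2 - f ^ (N - 2 * (a - t1)) * h1 ^ 2} c"
proof -
  obtain e where a: "a = t1 + e" using \<open>t1 < a\<close> by (metis less_imp_add_positive)
  define d where "d = N - (t1 + e + e)"
  have N: "N = d + t1 + e + e" using assms(3) unfolding a d_def by simp
  have "a \<le> N" and exps: "N - a = d + e" "N - a + t1 = d + e + t1" "N - 2 * (a - t1) = d + t1"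
      "N - a + t2 = d + e + t2"
    using a N by simp_all
  define G where "G = f ^ (d + e + t1) * h1"
  define X where "X = f ^ (d + e + t2) * h2 - f ^ (d + t1) * h1 ^ 2"
  have fN: "f ^ N = f ^ a * f ^ (d + e)" unfolding a N by (simp add: power_add)
  show ?thesis unfolding exps G_def[symmetric] X_def[symmetric]
  proof
    assume "u3_in_ideal (f ^ N) (f ^ a) (f ^ t1 * h1) (f ^ t2 * h2) c"
    then obtain r0 r1 r2 where r: "f ^ N dvd r0 * f ^ a" "f ^ N dvd r0 * (f ^ t1 * h1) + r1 * f ^ a"
        "f ^ N dvd r0 * (f ^ t2 * h2) + r1 * (f ^ t1 * h1) + r2 * f ^ a - c"
      unfolding u3_in_ideal_def by blast
    obtain k0 where k0: "r0 = f ^ (d + e) * k0"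
      using r(1) f unfolding fN by (auto simp: mult.commute)
    have "r0 * (f ^ t1 * h1) + r1 * f ^ a = f ^ a * (f ^ d * k0 * h1 + r1)"
      unfolding k0 a by (simp add: power_add algebra_simps)
    with r(2) obtain k1 where "f ^ d * k0 * h1 + r1 = f ^ (d + e) * k1"
      unfolding fN using f by auto
    then have r1: "r1 = f ^ (d + e) * k1 - f ^ d * k0 * h1" by (simp add: algebra_simps)
    have "r0 * (f ^ t2 * h2) + r1 * (f ^ t1 * h1) + r2 * f ^ a = k0 * X + k1 * G + r2 * f ^ a"
      unfolding k0 r1 X_def G_def
      by (simp add: power_add algebra_simps power2_eq_square)
    with r(3) have "f ^ N dvd k0 * X + k1 * G + r2 * f ^ a - c" by simp
    moreover have "in_ideal_mod (f ^ N) {f ^ a, G, X} (k0 * X + k1 * G + r2 * f ^ a)"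
      by (intro in_ideal_mod_add in_ideal_mod_generator) auto
    ultimately show "in_ideal_mod (f ^ N) {f ^ a, G, X} c"
      by (rule in_ideal_mod_cong)
  next
    assume c: "in_ideal_mod (f ^ N) {f ^ a, G, X} c"
    have "u3_in_ideal (f ^ N) (f ^ a) (f ^ t1 * h1) (f ^ t2 * h2) G"
      using u3_in_ideal_shifted_h1[where g = "f ^ t2 * h2", OF \<open>a \<le> N\<close>] exps
      by (simp add: G_def)
    moreover have "u3_in_ideal (f ^ N) (f ^ a) (f ^ t1 * h1) (f ^ t2 * h2) X"
      unfolding fN
      by (intro u3_in_idealI[where x = "f ^ (d + e)" and y = "- (f ^ d * h1)" and z = 0])
        (simp_all add: a X_def power_add algebra_simps power2_eq_square)
    ultimately show "u3_in_ideal (f ^ N) (f ^ a) (f ^ t1 * h1) (f ^ t2 * h2) c"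
      using u3_in_ideal_g1 by (intro u3_in_ideal_if_in_ideal_mod[OF _ _ c]) auto
  qed
qed

lemma u3_in_ideal_iff_double_a_ge:
  fixes f h1 h2 c :: "'a::idom"
  assumes f: "prime_elem f" and h1: "\<not> f dvd h1"
    and "t1 < a" and "a \<le> N" and "N + t1 \<le> 2 * a"
  shows "u3_in_ideal (f ^ N) (f ^ a) (f ^ t1 * h1) (f ^ t2 * h2) c \<longleftrightarrow>
    in_ideal_mod (f ^ N) {f ^ a, f ^ (N - a + t1) * h1, f ^ (a - t1 + t2) * h2 - f ^ t1 * h1 ^ 2} c"
proof -
  have f0: "f \<noteq> 0" using f by (rule prime_elem_not_zeroI)
  define g where "g = N - a"
  define d where "d = a - t1 - g"
  have a: "a = t1 + g + d" and N: "N = t1 + g + d + g"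
    using assms(3-5) unfolding g_def d_def by simp_all
  have exps: "N - a + t1 = g + t1" "a - t1 + t2 = g + d + t2"
    using a N by simp_all
  define G where "G = f ^ (g + t1) * h1"
  define Y where "Y = f ^ (g + d + t2) * h2 - f ^ t1 * h1 ^ 2"
  have fN: "f ^ N = f ^ a * f ^ g" unfolding a N by (simp add: power_add)
  show ?thesis unfolding exps G_def[symmetric] Y_def[symmetric]
  proof
    assume "u3_in_ideal (f ^ N) (f ^ a) (f ^ t1 * h1) (f ^ t2 * h2) c"
    then obtain r0 r1 r2 where r: "f ^ N dvd r0 * (f ^ t1 * h1) + r1 * f ^ a"
        "f ^ N dvd r0 * (f ^ t2 * h2) + r1 * (f ^ t1 * h1) + r2 * f ^ a - c"
      unfolding u3_in_ideal_def by blast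
    have "f ^ a dvd r0 * (f ^ t1 * h1) + r1 * f ^ a" using r(1) unfolding fN by (rule dvd_mult_left)
    then have "f ^ a dvd h1 * (f ^ t1 * r0)" by (simp add: dvd_add_left_iff ac_simps)
    then have "f ^ (t1 + (g + d)) dvd f ^ t1 * r0"
      unfolding prime_elem_power_dvd_mult_iff[OF f h1] a by (simp add: add.assoc)
    then obtain e0 where e0: "r0 = f ^ (g + d) * e0" using f0 by (auto simp: power_add)
    have "r0 * (f ^ t1 * h1) + r1 * f ^ a = f ^ a * (e0 * h1 + r1)"
      unfolding e0 a by (simp add: power_add algebra_simps)
    with r(1) obtain k1 where "e0 * h1 + r1 = f ^ g * k1"
      unfolding fN using f0 by auto
    then have r1: "r1 = f ^ g * k1 - e0 * h1" by (simp add: algebra_simps)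
    have "r0 * (f ^ t2 * h2) + r1 * (f ^ t1 * h1) + r2 * f ^ a = e0 * Y + k1 * G + r2 * f ^ a"
      unfolding e0 r1 Y_def G_def
      by (simp add: power_add algebra_simps power2_eq_square)
    with r(2) have "f ^ N dvd e0 * Y + k1 * G + r2 * f ^ a - c" by simp
    moreover have "in_ideal_mod (f ^ N) {f ^ a, G, Y} (e0 * Y + k1 * G + r2 * f ^ a)"
      by (intro in_ideal_mod_add in_ideal_mod_generator) auto
    ultimately show "in_ideal_mod (f ^ N) {f ^ a, G, Y} c"
      by (rule in_ideal_mod_cong)
  next
    assume c: "in_ideal_mod (f ^ N) {f ^ a, G, Y} c"
    have "u3_in_ideal (f ^ N) (f ^ a) (f ^ t1 * h1) (f ^ t2 * h2) G"
      using u3_in_ideal_shifted_h1[where g = "f ^ t2 * h2", OF \<open>a \<le> N\<close>] exps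
      by (simp add: G_def)
    moreover have "u3_in_ideal (f ^ N) (f ^ a) (f ^ t1 * h1) (f ^ t2 * h2) Y"
      unfolding fN
      by (intro u3_in_idealI[where x = "f ^ (g + d)" and y = "- h1" and z = 0])
        (simp_all add: a Y_def power_add algebra_simps power2_eq_square)
    ultimately show "u3_in_ideal (f ^ N) (f ^ a) (f ^ t1 * h1) (f ^ t2 * h2) c"
      using u3_in_ideal_g1 by (intro u3_in_ideal_if_in_ideal_mod[OF _ _ c]) auto
  qed
qed

section \<open>Valuations in \<open>R\<^bsup>1,\<omega>\<^esup>\<close>\<close>

lemma r1w_dvd_power_iff:
  fixes f X :: "'a::field poly"
  shows "r1w_dvd (f ^ N) (f ^ k) X \<longleftrightarrow> f ^ min k N dvd X"
proof
  assume "r1w_dvd (f ^ N) (f ^ k) X"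
  then obtain q where q: "f ^ N dvd f ^ k * q - X" by (auto simp: r1w_dvd_def mod_eq_dvd_iff)
  have "f ^ min k N dvd f ^ N" "f ^ min k N dvd f ^ k * q" by (simp_all add: le_imp_power_dvd)
  from dvd_trans[OF this(1) q] show "f ^ min k N dvd X"
    using dvd_diff_right_iff[OF \<open>f ^ min k N dvd f ^ k * q\<close>] by blast
next
  assume X: "f ^ min k N dvd X"
  show "r1w_dvd (f ^ N) (f ^ k) X"
  proof (cases "k \<le> N")
    case True
    with X obtain q where "X = f ^ k * q" by (auto simp: min_def)
    then show ?thesis by (auto simp: r1w_dvd_def)
  next
    case False
    with X show ?thesis by (auto simp: r1w_dvd_def mod_eq_dvd_iff min_def intro: exI[of _ 0])
  qed
qed

lemma r1w_fval_le_iff: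
  fixes f X :: "'a::field poly"
  assumes "j < N"
  shows "r1w_fval (f ^ N) f X \<le> enat j \<longleftrightarrow> \<not> f ^ Suc j dvd X"
proof -
  have "r1w_fval (f ^ N) f X \<le> enat j \<longleftrightarrow> (\<forall>k. f ^ min k N dvd X \<longrightarrow> k \<le> j)"
    by (auto simp: r1w_fval_def Sup_le_iff r1w_dvd_power_iff)
  also have "\<dots> \<longleftrightarrow> \<not> f ^ Suc j dvd X"
  proof
    assume H: "\<forall>k. f ^ min k N dvd X \<longrightarrow> k \<le> j"
    have "min (Suc j) N = Suc j" using assms by simp
    with H[rule_format, of "Suc j"] show "\<not> f ^ Suc j dvd X" by auto
  next
    assume X: "\<not> f ^ Suc j dvd X"
    show "\<forall>k. f ^ min k N dvd X \<longrightarrow> k \<le> j"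
    proof (intro allI impI)
      fix k assume "f ^ min k N dvd X"
      have "\<not> Suc j \<le> min k N"
      proof
        assume "Suc j \<le> min k N"
        then have "f ^ Suc j dvd f ^ min k N" by (rule le_imp_power_dvd)
        with \<open>f ^ min k N dvd X\<close> X show False by (blast intro: dvd_trans)
      qed
      then show "k \<le> j" using assms by simp
    qed
  qed
  finally show ?thesis .
qed

lemma r1w_fval_cong:
  assumes "\<omega> dvd X - Y"
  shows "r1w_fval \<omega> f X = r1w_fval \<omega> f Y"
proof -
  have "X mod \<omega> = Y mod \<omega>" using assms by (simp add: mod_eq_dvd_iff)
  then show ?thesis by (simp add: r1w_fval_def r1w_dvd_def)
qed

lemma r1w_fval_uminus: "r1w_fval (f ^ N) f (- X) = r1w_fval (f ^ N) f X"
  by (simp add: r1w_fval_def r1w_dvd_power_iff)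

lemma r1w_fval_mult_coprime:
  fixes f u X :: "'a::field poly"
  assumes "prime_elem f" "\<not> f dvd u"
  shows "r1w_fval (f ^ N) f (u * X) = r1w_fval (f ^ N) f X"
  using prime_elem_power_dvd_mult_iff[OF assms]
  by (simp add: r1w_fval_def r1w_dvd_power_iff)

lemma r1w_fval_ge_of_dvd:
  fixes f X :: "'a::field poly"
  assumes "f ^ N dvd X"
  shows "enat N \<le> r1w_fval (f ^ N) f X"
  unfolding r1w_fval_def using assms by (intro Sup_upper) (auto simp: r1w_dvd_power_iff)

lemma r1w_fval_power_mult:
  fixes f u :: "'a::field poly"
  assumes f: "prime_elem f" and u: "\<not> f dvd u" and "k < N"
  shows "r1w_fval (f ^ N) f (f ^ k * u) = enat k"
proof (rule antisym)
  have "\<not> f ^ Suc k dvd f ^ k * u"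
    by (simp add: prime_elem_power_dvd_power_mult_iff[OF f u] del: power_Suc)
  then show "r1w_fval (f ^ N) f (f ^ k * u) \<le> enat k"
    unfolding r1w_fval_le_iff[OF \<open>k < N\<close>] .
  show "enat k \<le> r1w_fval (f ^ N) f (f ^ k * u)"
    unfolding r1w_fval_def using \<open>k < N\<close> by (intro Sup_upper) (auto simp: r1w_dvd_power_iff min_def)
qed

lemma r1w_fval_power:
  fixes f :: "'a::field poly"
  assumes "prime_elem f" "k < N"
  shows "r1w_fval (f ^ N) f (f ^ k) = enat k"
  using r1w_fval_power_mult[OF assms(1) _ assms(2), of 1] assms(1)
  by (simp add: prime_elem_not_unit)

lemma r1w_fval_eq_of_unit_mult:
  fixes f u X Y :: "'a::field poly"
  assumes "prime_elem f" "\<not> f dvd u" "f ^ N dvd u * X + Y"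
  shows "r1w_fval (f ^ N) f X = r1w_fval (f ^ N) f Y"
proof -
  have "r1w_fval (f ^ N) f X = r1w_fval (f ^ N) f (u * X)"
    by (rule r1w_fval_mult_coprime[OF assms(1,2), symmetric])
  also have "\<dots> = r1w_fval (f ^ N) f (- Y)"
    by (rule r1w_fval_cong) (use assms(3) in simp)
  finally show ?thesis by (simp add: r1w_fval_uminus)
qed

lemma r1w_fval_diff_le:
  fixes f u w :: "'a::field poly"
  assumes f: "prime_elem f" and u: "\<not> f dvd u" and w: "\<not> f dvd w"
    and "A \<noteq> B" and "min A B < N"
  shows "r1w_fval (f ^ N) f (f ^ A * u - f ^ B * w) \<le> enat (min A B)"
proof -
  have "\<not> f ^ Suc (min A B) dvd f ^ A * u - f ^ B * w"
  proof
    assume "f ^ Suc (min A B) dvd f ^ A * u - f ^ B * w"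
    then have "f ^ Suc (min A B) dvd f ^ A * u \<longleftrightarrow> f ^ Suc (min A B) dvd f ^ B * w"
      using dvd_diff_right_iff dvd_diff_left_iff by blast
    then have "Suc (min A B) \<le> A \<longleftrightarrow> Suc (min A B) \<le> B"
      by (simp add: prime_elem_power_dvd_power_mult_iff[OF f u]
          prime_elem_power_dvd_power_mult_iff[OF f w] del: power_Suc)
    with \<open>A \<noteq> B\<close> show False by (cases "A \<le> B") (simp_all add: min_def)
  qed
  then show ?thesis unfolding r1w_fval_le_iff[OF \<open>min A B < N\<close>] .
qed

lemma r1w_unit_not_dvd:
  fixes f h :: "'a::field poly"
  assumes "prime_elem f" "0 < N" "r1w_unit (f ^ N) h"
  shows "\<not> f dvd h"
proof
  assume "f dvd h"
  obtain v where "f ^ N dvd h * v - 1" using assms(3) by (auto simp: r1w_unit_def mod_eq_dvd_iff)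
  moreover have "f dvd f ^ N" using \<open>0 < N\<close> by (cases N) simp_all
  ultimately have "f dvd h * v - 1" by (blast intro: dvd_trans)
  with dvd_diff_right_iff[OF dvd_mult2[OF \<open>f dvd h\<close>]] have "f dvd 1" by blast
  with assms(1) show False by (simp add: prime_elem_not_unit)
qed

lemma r1w_unit_mult_inv:
  assumes "r1w_unit \<omega> h"
  shows "\<omega> dvd h * r1w_inv \<omega> h - 1"
  using someI_ex[OF assms[unfolded r1w_unit_def]]
  by (simp add: r1w_inv_def mod_eq_dvd_iff)

section \<open>The least exponent \<open>L\<close>\<close>

lemma enat_Least_power_in_ideal_mod:
  fixes f :: "'a::field poly"
  assumes f: "prime_elem f" and E: "finite E" and "f ^ a \<in> E" and "a < N"
  shows "enat (LEAST j. in_ideal_mod (f ^ N) E (f ^ j)) = (MIN e\<in>E. r1w_fval (f ^ N) f e)"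
proof -
  define \<mu> where "\<mu> = (MIN e\<in>E. r1w_fval (f ^ N) f e)"
  have "E \<noteq> {}" using \<open>f ^ a \<in> E\<close> by blast
  have in_ideal_iff: "in_ideal_mod (f ^ N) E (f ^ j) \<longleftrightarrow> \<mu> \<le> enat j" if "j < N" for j
  proof -
    have "in_ideal_mod (f ^ N) E (f ^ j) \<longleftrightarrow> (\<exists>e\<in>E. \<not> f ^ Suc j dvd e)"
      by (rule power_in_ideal_mod_iff[OF f E that])
    also have "\<dots> \<longleftrightarrow> (\<exists>e\<in>E. r1w_fval (f ^ N) f e \<le> enat j)"
      by (simp only: r1w_fval_le_iff[OF that])
    also have "\<dots> \<longleftrightarrow> \<mu> \<le> enat j"
      unfolding \<mu>_def using E \<open>E \<noteq> {}\<close> by (simp add: Min_le_iff)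
    finally show ?thesis .
  qed
  have "\<mu> \<le> r1w_fval (f ^ N) f (f ^ a)"
    unfolding \<mu>_def using E \<open>f ^ a \<in> E\<close> by simp
  also have "\<dots> = enat a" using f \<open>a < N\<close> by (rule r1w_fval_power)
  finally obtain M where M: "\<mu> = enat M" "M \<le> a" by (cases \<mu>) auto
  have "(LEAST j. in_ideal_mod (f ^ N) E (f ^ j)) = M"
  proof (rule Least_equality)
    show "in_ideal_mod (f ^ N) E (f ^ M)" using M \<open>a < N\<close> by (simp add: in_ideal_iff)
    show "M \<le> j" if "in_ideal_mod (f ^ N) E (f ^ j)" for j
      using that M \<open>a < N\<close> in_ideal_iff[of j] by (cases "j < N") auto
  qed
  with M show ?thesis by (simp add: \<mu>_def)
qed

lemma Least_u3_power_h1_zero: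
  fixes f h1 h2 :: "'a::field poly" and N a t1 t2 :: nat
  assumes f: "prime_elem f" and "t2 < a" and "a < N" and h1: "f ^ N dvd h1"
  defines "L \<equiv> LEAST j. u3_in_ideal (f ^ N) (f ^ a) (f ^ t1 * h1) (f ^ t2 * h2) (f ^ j)"
  shows "f ^ N dvd h2 \<Longrightarrow> L = a"
    and "r1w_unit (f ^ N) h2 \<Longrightarrow> L = min a (N - a + t2)"
proof -
  define G where "G = f ^ (N - a + t2) * h2"
  have "L = (LEAST j. in_ideal_mod (f ^ N) {f ^ a, G} (f ^ j))"
    unfolding L_def G_def
    using u3_in_ideal_iff_h1_zero[OF prime_elem_not_zeroI[OF f] less_imp_le[OF \<open>a < N\<close>] h1]
    by presburger
  also have "enat \<dots> = min (enat a) (r1w_fval (f ^ N) f G)"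
    using enat_Least_power_in_ideal_mod[OF f, of "{f ^ a, G}" a N] \<open>a < N\<close>
    by (simp add: r1w_fval_power[OF f])
  finally have L: "enat L = min (enat a) (r1w_fval (f ^ N) f G)" .
  show "L = a" if "f ^ N dvd h2"
  proof -
    have "enat a \<le> enat N" using \<open>a < N\<close> by simp
    also have "\<dots> \<le> r1w_fval (f ^ N) f G" using that by (intro r1w_fval_ge_of_dvd) (simp add: G_def)
    finally show ?thesis using L by (simp add: min_def)
  qed
  show "L = min a (N - a + t2)" if "r1w_unit (f ^ N) h2"
  proof -
    have "r1w_fval (f ^ N) f G = enat (N - a + t2)"
      unfolding G_def using that assms by (intro r1w_fval_power_mult r1w_unit_not_dvd) auto
    with L show ?thesis by simp
  qed
qed

lemma Least_u3_power_h1_unit_a_le: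
  fixes f h1 h2 :: "'a::field poly" and N a t1 t2 :: nat
  assumes f: "prime_elem f" and "t1 < a" and "a < N" and "a \<le> N - a + t1"
    and h1: "r1w_unit (f ^ N) h1"
  defines "L \<equiv> LEAST j. u3_in_ideal (f ^ N) (f ^ a) (f ^ t1 * h1) (f ^ t2 * h2) (f ^ j)"
    and "X \<equiv> f ^ (N - a + t2) * h2 - f ^ (N - 2 * (a - t1)) * h1 ^ 2"
  shows "enat L = min (enat a) (min (enat (N - a + t1)) (r1w_fval (f ^ N) f X))"
    and "f ^ N dvd h2 \<Longrightarrow> L = min a (N - 2 * (a - t1))"
proof -
  define G where "G = f ^ (N - a + t1) * h1"
  have h1_coprime: "\<not> f dvd h1" using r1w_unit_not_dvd[OF f _ h1] \<open>a < N\<close> by simp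
  have "2 * a \<le> N + t1" using assms(3,4) by arith
  have "L = (LEAST j. in_ideal_mod (f ^ N) {f ^ a, G, X} (f ^ j))"
    unfolding L_def G_def X_def
    using u3_in_ideal_iff_double_a_le[OF prime_elem_not_zeroI[OF f] \<open>t1 < a\<close> \<open>2 * a \<le> N + t1\<close>]
    by presburger
  also have "enat \<dots> = min (enat a) (min (r1w_fval (f ^ N) f G) (r1w_fval (f ^ N) f X))"
    using enat_Least_power_in_ideal_mod[OF f, of "{f ^ a, G, X}" a N] \<open>a < N\<close>
    by (simp add: r1w_fval_power[OF f])
  also have "r1w_fval (f ^ N) f G = enat (N - a + t1)"
    unfolding G_def using assms(2,3) by (intro r1w_fval_power_mult[OF f h1_coprime]) simp
  finally show L: "enat L = min (enat a) (min (enat (N - a + t1)) (r1w_fval (f ^ N) f X))" .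
  show "L = min a (N - 2 * (a - t1))" if "f ^ N dvd h2"
  proof -
    have "r1w_fval (f ^ N) f X = r1w_fval (f ^ N) f (f ^ (N - 2 * (a - t1)) * h1 ^ 2)"
      unfolding X_def
      by (rule r1w_fval_eq_of_unit_mult[OF f, of 1]) (use f that in \<open>simp_all add: prime_elem_not_unit\<close>)
    also have "\<dots> = enat (N - 2 * (a - t1))"
      using assms(2,3) h1_coprime prime_elem_dvd_power[OF f]
      by (intro r1w_fval_power_mult[OF f]) auto
    finally have "L = min a (min (N - a + t1) (N - 2 * (a - t1)))" using L by simp
    moreover have "N - 2 * (a - t1) \<le> N - a + t1" by arith
    ultimately show ?thesis by (simp add: min_absorb2)
  qed
qed

lemma min_r1w_fval_inverse_form:
  fixes f h1 h2 :: "'a::field poly" and N a t1 t2 :: nat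
  assumes f: "prime_elem f" and "t2 < t1" and "t1 < a" and "a < N"
    and h1: "r1w_unit (f ^ N) h1" and h2: "r1w_unit (f ^ N) h2"
  defines "Y \<equiv> f ^ (a - t1 + t2) * h2 - f ^ t1 * h1 ^ 2"
    and "Z \<equiv> f ^ t1 * h1 - f ^ (a + t2 - t1) * h2 * r1w_inv (f ^ N) h1"
  shows "min (enat (N - a + t1)) (r1w_fval (f ^ N) f Y) =
    min (enat (N + t2 - t1)) (r1w_fval (f ^ N) f Z)"
proof -
  have h1_coprime: "\<not> f dvd h1" using r1w_unit_not_dvd[OF f _ h1] \<open>a < N\<close> by simp
  have h2_coprime: "\<not> f dvd h2" using r1w_unit_not_dvd[OF f _ h2] \<open>a < N\<close> by simp
  \<comment> \<open>\<open>h1 * Z = - Y\<close> modulo \<open>f ^ N\<close>, as \<open>r1w_inv\<close> inverts \<open>h1\<close> there\<close>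
  have "h1 * Z + Y = - (f ^ (a - t1 + t2) * h2 * (h1 * r1w_inv (f ^ N) h1 - 1))"
    unfolding Z_def Y_def using \<open>t1 < a\<close> by (simp add: algebra_simps power2_eq_square)
  then have "f ^ N dvd h1 * Z + Y" using r1w_unit_mult_inv[OF h1] by simp
  then have "r1w_fval (f ^ N) f Z = r1w_fval (f ^ N) f Y"
    by (rule r1w_fval_eq_of_unit_mult[OF f h1_coprime])
  moreover have "min (enat (N - a + t1)) (r1w_fval (f ^ N) f Y) =
      min (enat (N + t2 - t1)) (r1w_fval (f ^ N) f Y)"
  proof (cases "a - t1 + t2 = t1")
    case True
    then have "N - a + t1 = N + t2 - t1" using assms(3,4) by linarith
    then show ?thesis by simp
  next
    case False
    have "\<not> f dvd h1 ^ 2" using h1_coprime prime_elem_dvd_power[OF f] by blast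
    then have "r1w_fval (f ^ N) f Y \<le> enat (min (a - t1 + t2) t1)"
      unfolding Y_def using False assms(3,4)
      by (intro r1w_fval_diff_le[OF f h2_coprime]) auto
    moreover have "min (a - t1 + t2) t1 \<le> N - a + t1" "min (a - t1 + t2) t1 \<le> N + t2 - t1"
      using assms(2-4) by arith+
    ultimately have "r1w_fval (f ^ N) f Y \<le> enat (N - a + t1)"
      and "r1w_fval (f ^ N) f Y \<le> enat (N + t2 - t1)"
      by (meson enat_ord_simps(1) order_trans)+
    then show ?thesis by (simp add: min_absorb2)
  qed
  ultimately show ?thesis by simp
qed

lemma Least_u3_power_h1_unit_a_ge:
  fixes f h1 h2 :: "'a::field poly" and N a t1 t2 :: nat
  assumes f: "prime_elem f" and "t2 < t1" and "t1 < a" and "a < N" and "N - a + t1 \<le> a"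
    and h1: "r1w_unit (f ^ N) h1"
  defines "L \<equiv> LEAST j. u3_in_ideal (f ^ N) (f ^ a) (f ^ t1 * h1) (f ^ t2 * h2) (f ^ j)"
  shows "f ^ N dvd h2 \<Longrightarrow> L = t1"
    and "r1w_unit (f ^ N) h2 \<Longrightarrow> enat L = min (enat a) (min (enat (N + t2 - t1))
          (r1w_fval (f ^ N) f (f ^ t1 * h1 - f ^ (a + t2 - t1) * h2 * r1w_inv (f ^ N) h1)))"
proof -
  define G where "G = f ^ (N - a + t1) * h1"
  define Y where "Y = f ^ (a - t1 + t2) * h2 - f ^ t1 * h1 ^ 2"
  have h1_coprime: "\<not> f dvd h1" using r1w_unit_not_dvd[OF f _ h1] \<open>a < N\<close> by simp
  have "N + t1 \<le> 2 * a" using assms(4,5) by arith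
  have "L = (LEAST j. in_ideal_mod (f ^ N) {f ^ a, G, Y} (f ^ j))"
    unfolding L_def G_def Y_def
    using u3_in_ideal_iff_double_a_ge[OF f h1_coprime \<open>t1 < a\<close> less_imp_le[OF \<open>a < N\<close>]
        \<open>N + t1 \<le> 2 * a\<close>]
    by presburger
  also have "enat \<dots> = min (enat a) (min (r1w_fval (f ^ N) f G) (r1w_fval (f ^ N) f Y))"
    using enat_Least_power_in_ideal_mod[OF f, of "{f ^ a, G, Y}" a N] \<open>a < N\<close>
    by (simp add: r1w_fval_power[OF f])
  also have "r1w_fval (f ^ N) f G = enat (N - a + t1)"
    unfolding G_def using assms(3,4) by (intro r1w_fval_power_mult[OF f h1_coprime]) simp
  finally have L: "enat L = min (enat a) (min (enat (N - a + t1)) (r1w_fval (f ^ N) f Y))" .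
  show "enat L = min (enat a) (min (enat (N + t2 - t1))
      (r1w_fval (f ^ N) f (f ^ t1 * h1 - f ^ (a + t2 - t1) * h2 * r1w_inv (f ^ N) h1)))"
    if "r1w_unit (f ^ N) h2"
    using L min_r1w_fval_inverse_form[OF f assms(2-4) h1 that] by (simp add: Y_def)
  show "L = t1" if "f ^ N dvd h2"
  proof -
    have "r1w_fval (f ^ N) f Y = r1w_fval (f ^ N) f (f ^ t1 * h1 ^ 2)"
      unfolding Y_def
      by (rule r1w_fval_eq_of_unit_mult[OF f, of 1]) (use f that in \<open>simp_all add: prime_elem_not_unit\<close>)
    also have "\<dots> = enat t1"
      using assms(3,4) h1_coprime prime_elem_dvd_power[OF f]
      by (intro r1w_fval_power_mult[OF f]) auto
    finally have "L = min a (min (N - a + t1) t1)" using L by simp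
    with \<open>t1 < a\<close> show ?thesis by (simp add: min_def)
  qed
qed

theorem proposition4p2:
  fixes p m s a t1 t2 :: nat
    and f h1 h2 :: "'a::{field,finite} poly"
  assumes "prime p" and "m \<ge> 1" and "card (UNIV :: 'a set) = p ^ m"
    and "irreducible f"
    and "t2 < t1" and "t1 < a" and "a \<le> p ^ s - 1"
    and "h1 mod (f ^ (p ^ s)) = 0 \<or> r1w_unit (f ^ (p ^ s)) h1"
    and "h2 mod (f ^ (p ^ s)) = 0 \<or> r1w_unit (f ^ (p ^ s)) h2"
  shows
   "let \<omega> = f ^ (p ^ s);
        g = r4w_elem 0 (f ^ a) (f ^ t1 * h1) (f ^ t2 * h2);
        L = (LEAST L. r4w_in_ideal \<omega> g (r4w_elem 0 0 0 (f ^ L)));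
        \<beta>1 = r1w_fval \<omega> f (f ^ (p ^ s - a + t2) * h2 - f ^ (p ^ s - 2 * (a - t1)) * h1 ^ 2);
        \<beta>2 = r1w_fval \<omega> f (f ^ t1 * h1 - f ^ (a + t2 - t1) * h2 * r1w_inv \<omega> h1);
        z1 = (h1 mod \<omega> = 0); z2 = (h2 mod \<omega> = 0)
    in (z1 \<and> z2 \<longrightarrow> L = a)
     \<and> (z1 \<and> \<not> z2 \<longrightarrow> L = min a (p ^ s - a + t2))
     \<and> (\<not> z1 \<and> z2 \<and> a \<le> p ^ s - a + t1 \<longrightarrow> L = min a (p ^ s - 2 * (a - t1)))
     \<and> (\<not> z1 \<and> z2 \<and> a \<ge> p ^ s - a + t1 \<longrightarrow> L = t1)
     \<and> (\<not> z1 \<and> \<not> z2 \<and> a \<le> p ^ s - a + t1 \<longrightarrow>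
          enat L = min (enat a) (min (enat (p ^ s - a + t1)) \<beta>1))
     \<and> (\<not> z1 \<and> \<not> z2 \<and> a \<ge> p ^ s - a + t1 \<longrightarrow>
          enat L = min (enat a) (min (enat (p ^ s + t2 - t1)) \<beta>2))"
proof -
  have f: "prime_elem f" using assms(4) by (rule field_poly_irreducible_imp_prime)
  have "t2 < a" "a < p ^ s" using assms(5-7) by linarith+
  have h1: "f ^ p ^ s dvd h1 \<or> r1w_unit (f ^ p ^ s) h1"
    and h2: "f ^ p ^ s dvd h2 \<or> r1w_unit (f ^ p ^ s) h2"
    using assms(8,9) by (simp_all add: mod_eq_0_iff_dvd)
  show ?thesis
    unfolding Let_def r4w_in_ideal_iff_u3_in_ideal mod_eq_0_iff_dvd
    using f assms(5,6) \<open>t2 < a\<close> \<open>a < p ^ s\<close> h1 h2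
    by (intro conjI impI; elim conjE)
      (rule Least_u3_power_h1_zero Least_u3_power_h1_unit_a_le Least_u3_power_h1_unit_a_ge; blast)+
qed

end
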